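(* Let $\varphi$ be the morphism on $\{0,1\}^*$ with $\varphi(0)=010$ and $\varphi(1)=101$. Then $\mathbf{t}'=\varphi(\mathbf{t}_{3/2})$.
   Context: The Thue--Morse word in base $3/2$ is the unique binary sequence $\mathbf{t}_{3/2}=(t_n)_{n\ge0}$ with $t_0=0$, $t_{3n}=t_{3n+1}=t_{2n}$ and $t_{3n+2}=1-t_{2n+1}$ for all $n\ge0$ (equivalently, $t_n$ is the digit sum modulo $2$ of the base-$3/2$ expansion of $n$, where $\langle 0\rangle$ is empty and $\langle n\rangle=\langle m\rangle d$ for $2n=3m+d$, $d\in\{0,1,2\}$). Dekking's word $\mathbf{t}'=(x_n)_{n\ge0}$ is the unique binary infinite word with $x_0=0$ such that $\mathbf{t}'=\beta(x_0x_1)\beta(x_2x_3)\beta(x_4x_5)\cdots$, where $\beta(00)=\beta(01)=010$ and $\beta(10)=\beta(11)=101$. The morphism $\varphi$ is applied letter by letter to the infinite word $\mathbf{t}_{3/2}$. *)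

theory Defs
  imports Main
begin

(* Infinite binary words are modelled as functions nat => nat with values in {0,1}. *)

function tm32 :: "nat \<Rightarrow> nat" where
  "tm32 m = (if m = 0 then 0
             else if m mod 3 = 2 then 1 - tm32 (2 * (m div 3) + 1)
             else tm32 (2 * (m div 3)))"
  by auto
termination by (relation "measure id") (auto, presburger+)

definition phi :: "nat \<Rightarrow> nat list" where
  "phi a = (if a = 0 then [0,1,0] else [1,0,1])"

definition phi_word :: "(nat \<Rightarrow> nat) \<Rightarrow> (nat \<Rightarrow> nat)" where
  "phi_word w n = phi (w (n div 3)) ! (n mod 3)"

definition beta :: "nat \<Rightarrow> nat \<Rightarrow> nat list" where
  "beta a b = (if a = 0 then [0,1,0] else [1,0,1])"

(* x is a binary word with x_0 = 0 and x = beta(x0 x1) beta(x2 x3) beta(x4 x5) ... ;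
   block k of the concatenation occupies positions 3k, 3k+1, 3k+2. *)
definition dekking_prop :: "(nat \<Rightarrow> nat) \<Rightarrow> bool" where
  "dekking_prop x \<longleftrightarrow> (\<forall>n. x n \<in> {0,1}) \<and> x 0 = 0 \<and>
     (\<forall>k j. j < 3 \<longrightarrow> x (3 * k + j) = beta (x (2 * k)) (x (2 * k + 1)) ! j)"

definition dekking :: "nat \<Rightarrow> nat" where
  "dekking = (THE x. dekking_prop x)"

end

theory Submission
  imports Defs
begin

(* Let y = phi(t).  The letters of phi(a) are a, 1 - a, a, and comparing this with the
   recurrence of t gives y_{2k} = t_k.  Since beta(a, b) = phi(a), block k of y is
   phi(t_k) = beta(y_{2k}, y_{2k+1}), so y has Dekking's defining property.  That property
   determines a word uniquely: x_n is a function of x_{2(n div 3)}, and 2(n div 3) < n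
   unless n < 3, where x_n is a function of x_0 = 0. *)

declare tm32.simps [simp del]

lemma tm32_0 [simp]: "tm32 0 = 0"
  by (simp add: tm32.simps)

lemma tm32_mult3 [simp]: "tm32 (3 * m) = tm32 (2 * m)"
  by (cases "m = 0") (simp, subst tm32.simps, simp)

lemma tm32_mult3_plus1 [simp]: "tm32 (3 * m + 1) = tm32 (2 * m)"
proof -
  have "3 * m + 1 \<noteq> 0" "(3 * m + 1) mod 3 = 1" "(3 * m + 1) div 3 = m" by presburger+
  \<comment> \<open>these must be used before simp rewrites \<open>3 * m + 1\<close> to \<open>Suc (3 * m)\<close>\<close>
  then show ?thesis by (subst tm32.simps) (simp only:, simp)
qed

lemma tm32_mult3_plus2 [simp]: "tm32 (3 * m + 2) = 1 - tm32 (2 * m + 1)"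
proof -
  have "3 * m + 2 \<noteq> 0" "(3 * m + 2) mod 3 = 2" "(3 * m + 2) div 3 = m" by presburger+
  then show ?thesis by (subst tm32.simps) (simp only:, simp)
qed

lemma tm32_le_1: "tm32 n \<le> 1"
proof (induction n rule: less_induct)
  case (less n)
  show ?case
  proof (cases "n = 0 \<or> n mod 3 = 2")
    case True
    then show ?thesis by (auto simp: tm32.simps [of n])
  next
    case False
    then have "2 * (n div 3) < n" by linarith
    with False less show ?thesis by (simp add: tm32.simps [of n])
  qed
qed

lemma length_phi [simp]: "length (phi a) = 3"
  by (simp add: phi_def)

lemma set_phi: "set (phi a) \<subseteq> {0, 1}"
  by (simp add: phi_def)

lemma phi_nth:
  assumes "a \<le> 1"
  shows "phi a ! 0 = a" "phi a ! 1 = 1 - a" "phi a ! 2 = a"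
  using assms by (auto simp: phi_def le_Suc_eq)

lemma beta_eq_phi: "beta a b = phi a"
  by (simp add: beta_def phi_def)

lemma phi_word_binary: "phi_word w n \<in> {0, 1}"
proof -
  have "phi (w (n div 3)) ! (n mod 3) \<in> set (phi (w (n div 3)))" by simp
  with set_phi show ?thesis unfolding phi_word_def by blast
qed

lemma phi_word_block: "j < 3 \<Longrightarrow> phi_word w (3 * k + j) = phi (w k) ! j"
  by (simp add: phi_word_def)

lemma phi_word_tm32_even: "phi_word tm32 (2 * k) = tm32 k"
proof -
  obtain m r where k: "k = 3 * m + r" and "r < 3"
    using div_mult_mod_eq [of k 3] mod_less_divisor [of 3 k] by (metis mult.commute zero_less_numeral)
  then consider "r = 0" | "r = 1" | "r = 2" by linarith
  then show ?thesis
  proof cases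
    case 1
    then have "phi_word tm32 (2 * k) = phi (tm32 (2 * m)) ! 0"
      using phi_word_block [of 0 tm32 "2 * m"] k by simp
    then show ?thesis using 1 k phi_nth tm32_le_1 by simp
  next
    case 2
    then have "phi_word tm32 (2 * k) = phi (tm32 (2 * m)) ! 2"
      using phi_word_block [of 2 tm32 "2 * m"] k by simp
    also have "\<dots> = tm32 (2 * m)"
      using phi_nth tm32_le_1 by simp
    also have "\<dots> = tm32 k"
      unfolding k 2 by (rule tm32_mult3_plus1 [symmetric])
    finally show ?thesis .
  next
    case 3
    then have "2 * k = 3 * (2 * m + 1) + 1" using k by simp
    then have "phi_word tm32 (2 * k) = phi (tm32 (2 * m + 1)) ! 1"
      using phi_word_block [of 1 tm32 "2 * m + 1"] by simp
    also have "\<dots> = 1 - tm32 (2 * m + 1)"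
      using phi_nth tm32_le_1 by simp
    also have "\<dots> = tm32 k"
      unfolding k 3 by (rule tm32_mult3_plus2 [symmetric])
    finally show ?thesis .
  qed
qed

lemma dekking_prop_phi_word_tm32: "dekking_prop (phi_word tm32)"
  unfolding dekking_prop_def
proof (intro conjI allI impI)
  show "phi_word tm32 n \<in> {0, 1}" for n
    by (rule phi_word_binary)
  show "phi_word tm32 0 = 0"
    using phi_word_block [of 0 tm32 0] phi_nth(1) [of 0] by simp
  show "phi_word tm32 (3 * k + j) = beta (phi_word tm32 (2 * k)) (phi_word tm32 (2 * k + 1)) ! j"
    if "j < 3" for k j
    using that by (simp add: phi_word_block beta_eq_phi phi_word_tm32_even)
qed

lemma dekking_prop_unique:
  assumes x: "dekking_prop x" and y: "dekking_prop y"
  shows "x = y"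
proof
  fix n
  show "x n = y n"
  proof (induction n rule: less_induct)
    case (less n)
    define k where "k = n div 3"
    have n: "n = 3 * k + n mod 3" "n mod 3 < 3"
      by (simp_all add: k_def)
    have "x (2 * k) = y (2 * k)"
    proof (cases "k = 0")
      case True
      with x y show ?thesis by (simp add: dekking_prop_def)
    next
      case False
      then have "2 * k < n" using n by linarith
      then show ?thesis by (rule less)
    qed
    moreover have "x n = phi (x (2 * k)) ! (n mod 3)" "y n = phi (y (2 * k)) ! (n mod 3)"
      using x y n by (metis dekking_prop_def beta_eq_phi)+
    ultimately show ?case
      by simp
  qed
qed

theorem lemma4:
  shows "dekking = phi_word tm32"
  unfolding dekking_def
proof (rule the_equality)
  show "dekking_prop (phi_word tm32)"
    by (rule dekking_prop_phi_word_tm32)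
  show "x = phi_word tm32" if "dekking_prop x" for x
    by (rule dekking_prop_unique [OF that dekking_prop_phi_word_tm32])
qed

end
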